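(* For all $x>0$ and $0\le p\le 1$, $$W_p(x,1)\le K(x)^{p(1-p)}\,L(x,1).$$ Equivalently, for all $x,y>0$ and $0\le p\le 1$: $W_p(x,y)\le K(x/y)^{p(1-p)}L(x,y)$.
   Context: $K(x)=\frac{(x+1)^2}{4x}$ (Kantorovich constant) for $x>0$. $L(x,y)=\frac{x-y}{\log x-\log y}$ for $x\ne y$, $L(x,x)=x$. The Wigner--Yanase--Dyson function is $W_p(x,y)=\frac{p(1-p)(x-y)^2}{(x^p-y^p)(x^{1-p}-y^{1-p})}$ for $x\neq y$, $p\notin\{0,1\}$, with $W_p(x,x)=x$, and $W_0=W_1=L$ (limiting values). *)

theory Defs
  imports Complex_Main
begin

definition kant :: "real \<Rightarrow> real" where
  "kant x = (x + 1)^2 / (4 * x)"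

definition logmean :: "real \<Rightarrow> real \<Rightarrow> real" where
  "logmean x y = (if x = y then x else (x - y) / (ln x - ln y))"

definition wyd :: "real \<Rightarrow> real \<Rightarrow> real \<Rightarrow> real" where
  "wyd p x y =
     (if p = 0 \<or> p = 1 then logmean x y
      else if x = y then x
      else p * (1 - p) * (x - y)^2 / ((x powr p - y powr p) * (x powr (1 - p) - y powr (1 - p))))"

end

theory Submission
  imports Defs
begin

text \<open>
  Write \<open>x = e\<^sup>2\<^sup>u\<close> and \<open>q = 1 - p\<close>. Then \<open>L(x,1) = e\<^sup>u sinh u / u\<close>, \<open>K(x) = cosh\<^sup>2 u\<close> and
  \<open>W\<^sub>p(x,1) = e\<^sup>u (sinh u / u)\<^sup>2 / (sinh(pu)/(pu) \<cdot> sinh(qu)/(qu))\<close>, so the claim becomes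
  \<open>sinh u / u \<le> sinh(pu)/(pu) \<cdot> sinh(qu)/(qu) \<cdot> cosh(u)\<^bsup>2pq\<^esup>\<close>.
  Let \<open>\<Phi>(u)\<close> (\<open>sinh_ratio_defect p u\<close>) be the logarithm of the left side minus that of
  the right side.
  The duplication formula \<open>sinh u / u = sinh(u/2)/(u/2) \<cdot> cosh(u/2)\<close>, together with
  \<open>ln cosh(pv) \<ge> p\<^sup>2 ln cosh v\<close> (monotonicity of \<open>ln cosh t / t\<^sup>2\<close>) and
  \<open>2 ln cosh(u/2) \<le> ln cosh u\<close>, gives \<open>\<Phi>(u) \<le> \<Phi>(u/2)\<close>. Iterating, \<open>\<Phi>(u) \<le> \<Phi>(u/2\<^sup>n) \<le> ln cosh(u/2\<^sup>n) \<rightarrow> 0\<close>.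
\<close>

lemma sinh_ge_self:
  fixes t :: real
  assumes "0 \<le> t"
  shows "t \<le> sinh t"
  using real_le_x_sinh[OF assms] by (simp add: sinh_field_def exp_minus)

lemma sinh_le_mult_cosh:
  fixes t :: real
  assumes "0 \<le> t"
  shows "sinh t \<le> t * cosh t"
proof -
  have "0 * cosh 0 - sinh 0 \<le> t * cosh t - sinh t"
    by (rule DERIV_nonneg_imp_nondecreasing[OF assms])
       (auto intro!: derivative_eq_intros exI[of _ "_ * sinh _"] simp: algebra_simps)
  then show ?thesis by simp
qed

lemma mult_sinh_div_cosh_le_ln_cosh:
  fixes t :: real
  assumes "0 \<le> t"
  shows "t * sinh t / cosh t \<le> 2 * ln (cosh t)"
proof -
  have "2 * ln (cosh 0) - 0 * sinh 0 / cosh 0 \<le> 2 * ln (cosh t) - t * sinh t / cosh t"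
  proof (rule DERIV_nonneg_imp_nondecreasing[OF assms])
    fix s :: real
    assume "0 \<le> s" "s \<le> t"
    have "s \<le> sinh s * cosh s"
      using sinh_ge_self[of "2 * s"] \<open>0 \<le> s\<close> by (simp add: sinh_double)
    moreover have "DERIV (\<lambda>t. 2 * ln (cosh t) - t * sinh t / cosh t) s :>
        (sinh s * cosh s - s * (cosh s ^ 2 - sinh s ^ 2)) / cosh s ^ 2"
      by (auto intro!: derivative_eq_intros simp: power2_eq_square) (simp add: field_simps)
    ultimately show "\<exists>y. DERIV (\<lambda>t. 2 * ln (cosh t) - t * sinh t / cosh t) s :> y \<and> 0 \<le> y"
      by (auto simp: cosh_square_eq)
  qed
  then show ?thesis by simp
qed

lemma ln_cosh_div_square_antimono:
  fixes s t :: real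
  assumes "0 < s" "s \<le> t"
  shows "ln (cosh t) / t\<^sup>2 \<le> ln (cosh s) / s\<^sup>2"
proof (rule DERIV_nonpos_imp_nonincreasing[OF assms(2)])
  fix r :: real
  assume "s \<le> r" "r \<le> t"
  then have "0 < r" using assms by simp
  have "DERIV (\<lambda>t. ln (cosh t) / t\<^sup>2) r :>
      r * (r * sinh r / cosh r - 2 * ln (cosh r)) / (r\<^sup>2)\<^sup>2"
    using \<open>0 < r\<close> by (auto intro!: derivative_eq_intros simp: power2_eq_square algebra_simps)
  moreover have "r * (r * sinh r / cosh r - 2 * ln (cosh r)) \<le> 0"
    using mult_sinh_div_cosh_le_ln_cosh[of r] \<open>0 < r\<close> by (simp add: mult_nonneg_nonpos)
  ultimately show "\<exists>y. DERIV (\<lambda>t. ln (cosh t) / t\<^sup>2) r :> y \<and> y \<le> 0"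
    by (metis divide_nonpos_nonneg zero_le_power2)
qed

lemma ln_cosh_mult_ge:
  fixes p v :: real
  assumes "0 \<le> p" "p \<le> 1"
  shows "p\<^sup>2 * ln (cosh v) \<le> ln (cosh (p * v))"
proof (cases "p = 0 \<or> v = 0")
  case False
  then have "0 < p * \<bar>v\<bar>" "p * \<bar>v\<bar> \<le> \<bar>v\<bar>"
    using assms by (auto simp: mult_le_cancel_right1)
  from ln_cosh_div_square_antimono[OF this]
  have "p\<^sup>2 * ln (cosh \<bar>v\<bar>) \<le> ln (cosh (p * \<bar>v\<bar>))"
    using False by (simp add: power_mult_distrib field_simps)
  moreover have "cosh (p * \<bar>v\<bar>) = cosh (p * v)"
    using assms by (metis abs_mult abs_of_nonneg cosh_real_abs)
  ultimately show ?thesis by simp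
qed auto

lemma ln_cosh_half_le:
  fixes t :: real
  shows "2 * ln (cosh (t / 2)) \<le> ln (cosh t)"
proof -
  have "cosh t = 2 * cosh (t / 2) ^ 2 - 1"
    using cosh_double_cosh[of "t / 2"] by simp
  moreover have "1 \<le> cosh (t / 2) ^ 2"
    using cosh_real_ge_1[of "t / 2"] by (simp add: one_le_power)
  ultimately have "ln (cosh (t / 2) ^ 2) \<le> ln (cosh t)" by simp
  then show ?thesis by (simp add: ln_realpow)
qed

lemma sinh_div_self_pos:
  fixes t :: real
  assumes "t \<noteq> 0"
  shows "0 < sinh t / t"
  using assms by (auto simp: zero_less_divide_iff)

lemma ln_sinh_div_self_nonneg:
  fixes t :: real
  assumes "0 \<le> t"
  shows "0 \<le> ln (sinh t / t)"
  using sinh_ge_self[OF assms] assms by (cases "t = 0") auto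

lemma ln_sinh_div_self_le_ln_cosh:
  fixes t :: real
  assumes "0 \<le> t"
  shows "ln (sinh t / t) \<le> ln (cosh t)"
  using sinh_le_mult_cosh[OF assms] assms
  by (cases "t = 0") (auto simp: divide_le_eq mult.commute)

lemma ln_sinh_div_self_halve:
  fixes t :: real
  shows "ln (sinh t / t) = ln (sinh (t / 2) / (t / 2)) + ln (cosh (t / 2))"
proof (cases "t = 0")
  case False
  have "sinh t / t = sinh (t / 2) / (t / 2) * cosh (t / 2)"
    using sinh_double[of "t / 2"] False by simp
  then show ?thesis
    using ln_mult_pos[OF sinh_div_self_pos cosh_real_pos, of "t / 2" "t / 2"] False by simp
qed simp

text \<open>At \<open>t = 0\<close>, or when \<open>p \<in> {0, 1}\<close>, the affected quotients are \<open>0\<close> because \<open>x / 0 = 0\<close>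
  and \<open>ln 0 = 0\<close>; the lemmas below hold with these junk values included.\<close>

definition sinh_ratio_defect :: "real \<Rightarrow> real \<Rightarrow> real" where
  "sinh_ratio_defect p t =
     ln (sinh t / t) - ln (sinh (p * t) / (p * t)) - ln (sinh ((1 - p) * t) / ((1 - p) * t))
     - 2 * p * (1 - p) * ln (cosh t)"

lemma sinh_ratio_defect_minus: "sinh_ratio_defect p (- t) = sinh_ratio_defect p t"
  by (simp add: sinh_ratio_defect_def)

lemma sinh_ratio_defect_le_halve:
  assumes "0 \<le> p" "p \<le> 1"
  shows "sinh_ratio_defect p t \<le> sinh_ratio_defect p (t / 2)"
proof -
  have "p\<^sup>2 * ln (cosh (t / 2)) \<le> ln (cosh (p * (t / 2)))"
       "(1 - p)\<^sup>2 * ln (cosh (t / 2)) \<le> ln (cosh ((1 - p) * (t / 2)))"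
    using ln_cosh_mult_ge[of p "t / 2"] ln_cosh_mult_ge[of "1 - p" "t / 2"] assms by simp_all
  moreover have "2 * p * (1 - p) * (2 * ln (cosh (t / 2))) \<le> 2 * p * (1 - p) * ln (cosh t)"
    using ln_cosh_half_le[of t] assms by (intro mult_left_mono) auto
  ultimately show ?thesis
    unfolding sinh_ratio_defect_def
    using ln_sinh_div_self_halve[of t] ln_sinh_div_self_halve[of "p * t"]
      ln_sinh_div_self_halve[of "(1 - p) * t"]
    by (simp add: algebra_simps power2_eq_square)
qed

lemma sinh_ratio_defect_le_ln_cosh:
  assumes "0 \<le> p" "p \<le> 1" "0 \<le> t"
  shows "sinh_ratio_defect p t \<le> ln (cosh t)"
proof -
  have "0 \<le> ln (sinh (p * t) / (p * t))" "0 \<le> ln (sinh ((1 - p) * t) / ((1 - p) * t))"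
    using assms by (simp_all add: ln_sinh_div_self_nonneg)
  moreover have "0 \<le> 2 * p * (1 - p) * ln (cosh t)"
    using assms cosh_real_ge_1[of t] by simp
  ultimately show ?thesis
    unfolding sinh_ratio_defect_def using ln_sinh_div_self_le_ln_cosh[OF assms(3)] by linarith
qed

lemma sinh_ratio_defect_nonpos:
  assumes "0 \<le> p" "p \<le> 1"
  shows "sinh_ratio_defect p t \<le> 0"
proof -
  define u where "u = \<bar>t\<bar>"
  have "sinh_ratio_defect p u \<le> sinh_ratio_defect p (u / 2 ^ n)" for n
  proof (induction n)
    case (Suc n)
    then show ?case
      using sinh_ratio_defect_le_halve[OF assms, of "u / 2 ^ n"] by (simp add: field_simps)
  qed simp
  then have "\<forall>n. sinh_ratio_defect p u \<le> ln (cosh (u / 2 ^ n))"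
    using sinh_ratio_defect_le_ln_cosh[OF assms] u_def by (meson order_trans abs_ge_zero
      divide_nonneg_pos zero_less_power zero_less_numeral)
  moreover have "(\<lambda>n. ln (cosh (u / 2 ^ n))) \<longlonglongrightarrow> ln (cosh 0)"
    by (intro isCont_tendsto_compose[where g = "\<lambda>t. ln (cosh t)"] LIMSEQ_divide_realpow_zero)
       (auto intro!: continuous_intros)
  ultimately have "sinh_ratio_defect p u \<le> 0"
    by (intro LIMSEQ_le_const) auto
  then show ?thesis
    unfolding u_def by (cases "0 \<le> t") (auto simp: sinh_ratio_defect_minus)
qed

lemma sinh_div_self_le_product:
  fixes p u :: real
  assumes "0 < p" "p < 1"
  shows "sinh u / u \<le>
    sinh (p * u) / (p * u) * (sinh ((1 - p) * u) / ((1 - p) * u)) * cosh u powr (2 * p * (1 - p))"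
proof (cases "u = 0")
  case False
  define A where "A = sinh (p * u) / (p * u)"
  define B where "B = sinh ((1 - p) * u) / ((1 - p) * u)"
  define C where "C = cosh u powr (2 * p * (1 - p))"
  have "0 < A" "0 < B" "0 < C"
    using assms False by (simp_all add: A_def B_def C_def sinh_div_self_pos)
  then have "ln (A * B * C) = ln A + ln B + 2 * p * (1 - p) * ln (cosh u)"
    by (simp add: ln_mult_pos C_def)
  then have "ln (sinh u / u) \<le> ln (A * B * C)"
    using sinh_ratio_defect_nonpos[of p u] assms
    by (simp add: sinh_ratio_defect_def A_def B_def)
  then have "sinh u / u \<le> A * B * C"
    using \<open>0 < A\<close> \<open>0 < B\<close> \<open>0 < C\<close> sinh_div_self_pos[OF False] by simp
  then show ?thesis
    unfolding A_def B_def C_def .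
qed simp

lemma exp_double_diff_one: "exp (2 * u) - 1 = 2 * exp u * sinh (u :: real)"
  by (simp add: sinh_field_def exp_minus field_simps flip: exp_add)

lemma exp_double_add_one: "exp (2 * u) + 1 = 2 * exp u * cosh (u :: real)"
  by (simp add: cosh_field_def exp_minus field_simps flip: exp_add)

lemma kant_exp_double: "kant (exp (2 * u)) = cosh u ^ 2"
proof -
  have "kant (exp (2 * u)) = (2 * exp u * cosh u)\<^sup>2 / (4 * (exp u * exp u))"
    by (simp add: kant_def exp_double_add_one flip: exp_add)
  then show ?thesis by (simp add: power2_eq_square)
qed

lemma logmean_exp_double:
  assumes "u \<noteq> 0"
  shows "logmean (exp (2 * u)) 1 = exp u * (sinh u / u)"
  using assms by (simp add: logmean_def exp_double_diff_one)

lemma wyd_exp_double: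
  assumes "0 < p" "p < 1" "u \<noteq> 0"
  shows "wyd p (exp (2 * u)) 1 =
    exp u * (sinh u / u)\<^sup>2 / (sinh (p * u) / (p * u) * (sinh ((1 - p) * u) / ((1 - p) * u)))"
proof -
  have powr_diff_one: "exp (2 * u) powr r - 1 = 2 * exp (r * u) * sinh (r * u)" for r
    using exp_double_diff_one[of "r * u"] by (simp add: powr_def algebra_simps)
  have "wyd p (exp (2 * u)) 1 =
      p * (1 - p) * (2 * exp u * sinh u)\<^sup>2 /
      ((2 * exp (p * u) * sinh (p * u)) * (2 * exp ((1 - p) * u) * sinh ((1 - p) * u)))"
    using assms by (simp add: wyd_def powr_diff_one exp_double_diff_one)
  also have "\<dots> = p * (1 - p) * exp u * sinh u ^ 2 / (sinh (p * u) * sinh ((1 - p) * u))"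
    using assms exp_add[of "p * u" "(1 - p) * u"] by (simp add: power2_eq_square field_simps)
  also have "\<dots> = exp u * (sinh u / u)\<^sup>2 / (sinh (p * u) / (p * u) * (sinh ((1 - p) * u) / ((1 - p) * u)))"
    using assms by (simp add: power2_eq_square field_simps)
  finally show ?thesis .
qed

lemma wyd_exp_double_le:
  assumes "0 \<le> p" "p \<le> 1"
  shows "wyd p (exp (2 * u)) 1 \<le> cosh u powr (2 * p * (1 - p)) * logmean (exp (2 * u)) 1"
proof -
  consider "p = 0 \<or> p = 1" | "u = 0" | "0 < p" "p < 1" "u \<noteq> 0"
    using assms by linarith
  then show ?thesis
  proof cases
    case 3
    define A where "A = sinh (p * u) / (p * u)"
    define B where "B = sinh ((1 - p) * u) / ((1 - p) * u)"
    have "0 < A" "0 < B" "0 < sinh u / u"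
      using 3 by (simp_all add: A_def B_def sinh_div_self_pos)
    then have "0 < A * B" "0 < exp u * (sinh u / u)"
      by (simp_all only: mult_pos_pos exp_gt_zero)
    moreover have "sinh u / u \<le> A * B * cosh u powr (2 * p * (1 - p))"
      using sinh_div_self_le_product[OF 3(1,2)] by (simp add: A_def B_def)
    ultimately have "sinh u / u / (A * B) \<le> cosh u powr (2 * p * (1 - p))"
      by (metis pos_divide_le_eq mult.commute)
    then have "exp u * (sinh u / u) * (sinh u / u / (A * B))
        \<le> exp u * (sinh u / u) * cosh u powr (2 * p * (1 - p))"
      using \<open>0 < exp u * (sinh u / u)\<close> by (intro mult_left_mono) auto
    then show ?thesis
      unfolding wyd_exp_double[OF 3] logmean_exp_double[OF 3(3)] A_def[symmetric] B_def[symmetric]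
      by (simp add: power2_eq_square mult_ac)
  qed (auto simp: wyd_def logmean_def)
qed

theorem theorem2p3:
  fixes x p :: real
  assumes "x > 0" and "0 \<le> p" and "p \<le> 1"
  shows "wyd p x 1 \<le> kant x powr (p * (1 - p)) * logmean x 1"
proof -
  define u where "u = ln x / 2"
  have x: "x = exp (2 * u)"
    using assms(1) by (simp add: u_def)
  have "kant x powr (p * (1 - p)) = (cosh u powr 2) powr (p * (1 - p))"
    unfolding x kant_exp_double by simp
  also have "\<dots> = cosh u powr (2 * p * (1 - p))"
    by (simp only: powr_powr mult.assoc)
  finally show ?thesis
    using wyd_exp_double_le[OF assms(2,3)] x by simp
qed

end
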